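(* Let $L\in\mathbb N$, $L\ge 2$, ${\bf A}\in\mathbb R^{M\times N}$, ${\bf b}\in\mathbb R^M$, $\tilde\eta>0$. Let ${\bf x}$ follow $\partial_t{\bf x}=-\nabla\mathcal L({\bf x})$ with ${\bf x}(0)>0$, and let $(r,{\bf u})$ follow the weight-normalized gradient flow with $(\eta_r,\eta_{\bf u})=(\tilde\eta,1)$, $r_0>0$, ${\bf u}_0>0$, $\|{\bf u}_0\|_2=1$, and ${\bf x}_{wn}=\frac{r}{\|{\bf u}\|_2}{\bf u}$; suppose $\lim_{t\to\infty}r(t)$ exists and is nonzero. Assume there exists ${\bf v}\in\mathbb R^N$ with ${\bf v}>0$ and ${\bf A}{\bf v}=0$, and that ${\bf x}(t)$ and ${\bf x}_{wn}(t)$ are bounded above uniformly in $t\ge0$. Then every entry of ${\bf x}(t)$ and of ${\bf x}_{wn}(t)$ is bounded away from zero uniformly in $t\ge0$.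
   Context: $\odot$ denotes entrywise product/power; vector inequalities are entrywise. Loss: $\mathcal L({\bf x})=\frac{1}{2L}\|{\bf A}{\bf x}^{\odot L}-{\bf b}\|_2^2$. Weight-normalized loss $\tilde{\mathcal L}(r,{\bf u})=\mathcal L\big(\frac{r}{\|{\bf u}\|_2}{\bf u}\big)$. Weight-normalized gradient flow: $\partial_t r=-\eta_r\nabla_r\tilde{\mathcal L}(r,{\bf u})$, $\partial_t{\bf u}=-\eta_{\bf u}\nabla_{\bf u}\tilde{\mathcal L}(r,{\bf u})$, $r(0)=r_0$, ${\bf u}(0)={\bf u}_0$. *)

theory Defs
  imports "HOL-Analysis.Analysis"
begin

definition lossL :: "nat \<Rightarrow> real^'n^'m \<Rightarrow> real^'m \<Rightarrow> real^'n \<Rightarrow> real" where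
  "lossL L A b x = (1 / (2 * real L)) * (norm (A *v (\<chi> i. (x $ i) ^ L) - b))\<^sup>2"

definition lossWN :: "nat \<Rightarrow> real^'n^'m \<Rightarrow> real^'m \<Rightarrow> real \<Rightarrow> real^'n \<Rightarrow> real" where
  "lossWN L A b r u = lossL L A b ((r / norm u) *\<^sub>R u)"

text \<open>x solves dx/dt = - grad L(x) on [0,oo); the gradient is the Riesz representer
  of the Frechet derivative.\<close>
definition grad_flow :: "nat \<Rightarrow> real^'n^'m \<Rightarrow> real^'m \<Rightarrow> (real \<Rightarrow> real^'n) \<Rightarrow> bool" where
  "grad_flow L A b x \<longleftrightarrow>
     (\<forall>t\<ge>0. \<exists>g. (lossL L A b has_derivative (\<lambda>h. g \<bullet> h)) (at (x t)) \<and>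
                 (x has_vector_derivative (- g)) (at t within {0..}))"

definition wn_flow :: "nat \<Rightarrow> real^'n^'m \<Rightarrow> real^'m \<Rightarrow> real \<Rightarrow> real \<Rightarrow>
    (real \<Rightarrow> real) \<Rightarrow> (real \<Rightarrow> real^'n) \<Rightarrow> bool" where
  "wn_flow L A b eta_r eta_u r u \<longleftrightarrow>
     (\<forall>t\<ge>0. \<exists>gr gu.
        ((\<lambda>s. lossWN L A b s (u t)) has_real_derivative gr) (at (r t)) \<and>
        ((\<lambda>w. lossWN L A b (r t) w) has_derivative (\<lambda>h. gu \<bullet> h)) (at (u t)) \<and>
        (r has_real_derivative (- eta_r * gr)) (at t within {0..}) \<and>
        (u has_vector_derivative (- (eta_u *\<^sub>R gu))) (at t within {0..}))"

end

theory Submission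
  imports Defs
begin

text \<open>
  Since \<open>A v = 0\<close> with \<open>v > 0\<close>, the gradient of the loss at any point \<open>s y\<close> with \<open>y > 0\<close> is
  orthogonal to the vector with entries \<open>v_i / y_i^(L-1)\<close>. Let \<open>\<phi>\<close> be a primitive of
  \<open>y^(1-L)\<close> on \<open>(0, \<infinity>)\<close>; it tends to \<open>-\<infinity>\<close> at \<open>0\<close>. Along the gradient flow the potential
  \<open>\<Sum>_i v_i \<phi>(x_i)\<close> is conserved as long as \<open>x > 0\<close>; together with the upper bound on \<open>x\<close>
  this keeps every coordinate above a fixed level, so by continuity \<open>x\<close> never reaches the
  boundary of the orthant.

  Along the weight-normalized flow \<open>\<parallel>u\<parallel> = 1\<close> is preserved and the same potential of \<open>u\<close>
  changes only through \<open>r\<close>: \<open>\<Sum>_i v_i \<phi>(u_i) + (\<Sum>_i v_i) r^2/(2\<eta>)\<close> for \<open>L = 2\<close>, and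
  \<open>\<Sum>_i v_i \<phi>(u_i) exp(-(L-2) r^2/(2\<eta>))\<close> for \<open>L > 2\<close>, are conserved. Since \<open>r\<close> converges it
  is bounded, and \<open>u_i \<le> 1\<close>, so \<open>u\<close> stays away from zero in the same way. Finally \<open>r\<close> never vanishes, because \<open>r'\<close> carries a factor
  \<open>r^(L-1)\<close> (Gronwall), hence its nonzero limit bounds \<open>|r|\<close> away from zero, and \<open>x_wn = r u\<close>.
\<close>

section \<open>Calculus on the half-line\<close>

lemma has_vector_derivative_vec_nth:
  assumes "(f has_vector_derivative f') F"
  shows "((\<lambda>t. f t $ i) has_real_derivative f' $ i) F"
  using bounded_linear.has_vector_derivative[OF bounded_linear_vec_nth assms]
  by (simp add: has_real_derivative_iff_has_vector_derivative)

lemma has_derivative_inner_unique: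
  assumes "(f has_derivative (\<lambda>h. g \<bullet> h)) (at y)" and "(f has_derivative (\<lambda>h. g' \<bullet> h)) (at y)"
  shows "g = g'"
proof -
  have "(\<lambda>h. g \<bullet> h) = (\<lambda>h. g' \<bullet> h)"
    using has_derivative_unique[OF assms] .
  then have "(g - g') \<bullet> (g - g') = 0"
    using fun_cong[of _ _ "g - g'"] by (simp add: inner_diff_left)
  then show ?thesis by simp
qed

lemma continuous_on_if_has_vector_derivative:
  assumes "\<And>t. t \<in> S \<Longrightarrow> (f has_vector_derivative f' t) (at t within S)"
  shows "continuous_on S f"
  unfolding continuous_on_eq_continuous_within using assms has_vector_derivative_continuous by blast

lemma nondecreasing_if_deriv_nonneg_within:
  fixes f :: "real \<Rightarrow> real"
  assumes "a \<le> b"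
    and deriv: "\<And>t. a \<le> t \<Longrightarrow> t \<le> b \<Longrightarrow> (f has_real_derivative f' t) (at t within {a..})"
    and nonneg: "\<And>t. a \<le> t \<Longrightarrow> t \<le> b \<Longrightarrow> 0 \<le> f' t"
  shows "f a \<le> f b"
proof (rule DERIV_nonneg_imp_increasing_open[OF \<open>a \<le> b\<close>])
  fix t assume t: "a < t" "t < b"
  have "at t within {a..} = at t"
    using t by (intro at_within_interior) auto
  then show "\<exists>y. (f has_real_derivative y) (at t) \<and> 0 \<le> y"
    using deriv[of t] nonneg[of t] t by auto
next
  show "continuous_on {a..b} f"
    unfolding continuous_on_eq_continuous_within
  proof
    fix t assume "t \<in> {a..b}"
    then have "continuous (at t within {a..}) f"
      using deriv by (auto intro: DERIV_continuous)
    then show "continuous (at t within {a..b}) f"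
      by (rule continuous_within_subset) auto
  qed
qed

lemma constant_if_deriv_zero_within:
  fixes f :: "real \<Rightarrow> real"
  assumes "a \<le> b" and "\<And>t. a \<le> t \<Longrightarrow> t \<le> b \<Longrightarrow> (f has_real_derivative 0) (at t within {a..})"
  shows "f b = f a"
proof -
  have "f a \<le> f b"
    by (rule nondecreasing_if_deriv_nonneg_within[where f' = "\<lambda>_. 0"]) (use assms in auto)
  moreover have "- f a \<le> - f b"
    by (rule nondecreasing_if_deriv_nonneg_within[where f' = "\<lambda>_. 0" and f = "\<lambda>t. - f t"])
      (use assms DERIV_minus in fastforce)+
  ultimately show ?thesis by simp
qed

lemma lower_bound_of_exponential_decay:
  fixes f :: "real \<Rightarrow> real"
  assumes "0 \<le> T"
    and deriv: "\<And>t. 0 \<le> t \<Longrightarrow> t \<le> T \<Longrightarrow> (f has_real_derivative f' t) (at t within {0..})"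
    and decay: "\<And>t. 0 \<le> t \<Longrightarrow> t \<le> T \<Longrightarrow> - \<kappa> * f t \<le> f' t"
  shows "f 0 \<le> f T * exp (\<kappa> * T)"
proof -
  have "f 0 * exp (\<kappa> * 0) \<le> f T * exp (\<kappa> * T)"
  proof (rule nondecreasing_if_deriv_nonneg_within[OF \<open>0 \<le> T\<close>])
    fix t assume "0 \<le> t" "t \<le> T"
    then show "((\<lambda>t. f t * exp (\<kappa> * t)) has_real_derivative
        exp (\<kappa> * t) * (f' t + \<kappa> * f t)) (at t within {0..})"
      using deriv by (auto intro!: derivative_eq_intros simp: algebra_simps)
    show "0 \<le> exp (\<kappa> * t) * (f' t + \<kappa> * f t)"
      using decay[OF \<open>0 \<le> t\<close> \<open>t \<le> T\<close>] by simp
  qed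
  then show ?thesis by simp
qed

lemma bounded_if_continuous_convergent:
  fixes f :: "real \<Rightarrow> real"
  assumes cont: "continuous_on {a..} f" and lim: "(f \<longlongrightarrow> l) at_top"
  shows "\<exists>R. \<forall>t\<ge>a. \<bar>f t\<bar> \<le> R"
proof -
  have "eventually (\<lambda>t. \<bar>f t\<bar> < \<bar>l\<bar> + 1) at_top"
    using order_tendstoD(2)[OF tendsto_rabs[OF lim]] by simp
  then obtain T where T: "\<And>t. t \<ge> T \<Longrightarrow> \<bar>f t\<bar> < \<bar>l\<bar> + 1"
    by (auto simp: eventually_at_top_linorder)
  have "compact (f ` {a..T})"
    by (intro compact_continuous_image continuous_on_subset[OF cont]) auto
  then obtain B where B: "\<And>t. t \<in> {a..T} \<Longrightarrow> \<bar>f t\<bar> \<le> B"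
    by (meson compact_imp_bounded bounded_real imageI)
  have "\<bar>f t\<bar> \<le> max B (\<bar>l\<bar> + 1)" if "t \<ge> a" for t
    using B[of t] T[of t] that by (cases "t \<le> T") auto
  then show ?thesis by blast
qed

lemma bounded_away_if_continuous_convergent_nonzero:
  fixes f :: "real \<Rightarrow> real"
  assumes cont: "continuous_on {a..} f" and lim: "(f \<longlongrightarrow> l) at_top"
    and nonzero: "\<forall>t\<ge>a. f t \<noteq> 0" and "l \<noteq> 0"
  shows "\<exists>m>0. \<forall>t\<ge>a. m \<le> \<bar>f t\<bar>"
proof -
  obtain R where R: "\<And>t. t \<ge> a \<Longrightarrow> \<bar>inverse (f t)\<bar> \<le> R"
    using bounded_if_continuous_convergent[of a "\<lambda>t. inverse (f t)" "inverse l"]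
      cont nonzero lim \<open>l \<noteq> 0\<close> by (auto intro: continuous_on_inverse tendsto_inverse)
  have "inverse (R + 1) \<le> \<bar>f t\<bar>" if "t \<ge> a" for t
  proof -
    have "0 < \<bar>f t\<bar>" using nonzero that by simp
    moreover have "inverse \<bar>f t\<bar> \<le> R + 1" using R[OF that] by (simp add: abs_inverse)
    ultimately show ?thesis
      using le_imp_inverse_le[of "inverse \<bar>f t\<bar>" "R + 1"] by simp
  qed
  moreover have "R \<ge> 0" using R[of a] by linarith
  ultimately show ?thesis by (intro exI[of _ "inverse (R + 1)"]) auto
qed

lemma lower_bound_while_positive:
  fixes p :: "real \<Rightarrow> real^'n"
  assumes cont: "continuous_on {0..} p" and pos0: "\<forall>i. 0 < p 0 $ i" and "0 < c"
    and bound: "\<And>T. 0 \<le> T \<Longrightarrow> \<forall>t\<in>{0..T}. \<forall>i. 0 < p t $ i \<Longrightarrow> \<forall>i. c \<le> p T $ i"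
  shows "\<forall>t\<ge>0. \<forall>i. c \<le> p t $ i"
proof -
  have cont_nth: "continuous_on {0..T} (\<lambda>t. p t $ i)" for T i
    by (intro continuous_on_component continuous_on_subset[OF cont]) auto
  have "\<forall>t\<in>{0..T}. \<forall>i. 0 < p t $ i" if "0 \<le> T" for T
  proof (rule ccontr)
    define K where "K = (\<Union>i. {0..T} \<inter> (\<lambda>t. p t $ i) -` {..0})"
    assume "\<not> (\<forall>t\<in>{0..T}. \<forall>i. 0 < p t $ i)"
    then have "K \<noteq> {}" by (auto simp: K_def not_less)
    moreover have "compact K"
    proof -
      have "closed K" unfolding K_def
        by (intro closed_UN finite_UNIV ballI continuous_closed_preimage cont_nth) auto
      moreover have "bounded K"
        by (rule bounded_subset[of "{0..T}"]) (auto simp: K_def)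
      ultimately show ?thesis by (simp add: compact_eq_bounded_closed)
    qed
    \<comment> \<open>\<open>\<tau>\<close> is the first time a coordinate reaches \<open>0\<close>; before it the bound holds, hence also at it.\<close>
    ultimately obtain \<tau> where "\<tau> \<in> K" and first: "\<And>t. t \<in> K \<Longrightarrow> \<tau> \<le> t"
      by (metis compact_attains_inf)
    then obtain j where \<tau>: "0 \<le> \<tau>" "\<tau> \<le> T" and "p \<tau> $ j \<le> 0"
      by (auto simp: K_def)
    have "\<tau> \<noteq> 0" using \<open>p \<tau> $ j \<le> 0\<close> pos0[rule_format, of j] by auto
    then have "0 < \<tau>" using \<tau> by simp
    have before: "c \<le> p t $ j" if "0 \<le> t" "t < \<tau>" for t
    proof -
      have "\<forall>s\<in>{0..t}. \<forall>i. 0 < p s $ i"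
      proof (intro ballI allI)
        fix s i assume s: "s \<in> {0..t}"
        then have "s \<notin> K" using first[of s] that by force
        then show "0 < p s $ i" using s that \<tau> by (auto simp: K_def not_le)
      qed
      then show ?thesis using bound that by blast
    qed
    have "closed ({0..\<tau>} \<inter> (\<lambda>t. p t $ j) -` {c..})"
      by (intro continuous_closed_preimage cont_nth) auto
    moreover have "{0..<\<tau>} \<subseteq> {0..\<tau>} \<inter> (\<lambda>t. p t $ j) -` {c..}"
      using before by auto
    ultimately have "closure {0..<\<tau>} \<subseteq> {0..\<tau>} \<inter> (\<lambda>t. p t $ j) -` {c..}"
      by (rule closure_minimal[rotated])
    then have "c \<le> p \<tau> $ j"
      using closure_atLeastLessThan[OF \<open>0 < \<tau>\<close>] \<open>0 < \<tau>\<close> by fastforce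
    then show False using \<open>p \<tau> $ j \<le> 0\<close> \<open>0 < c\<close> by simp
  qed
  then show ?thesis using bound by blast
qed

section \<open>The gradient of the loss\<close>

definition lossL_grad :: "nat \<Rightarrow> real^'n^'m \<Rightarrow> real^'m \<Rightarrow> real^'n \<Rightarrow> real^'n" where
  "lossL_grad L A b y = (\<chi> i. ((A *v (\<chi> k. (y $ k) ^ L) - b) v* A) $ i * (y $ i) ^ (L - 1))"

lemma lossL_eq_sum:
  "lossL L A b y = (\<Sum>j\<in>UNIV. ((\<Sum>i\<in>UNIV. A$j$i * (y$i)^L) - b$j)^2) / (2 * real L)"
  unfolding lossL_def power2_norm_eq_inner inner_vec_def matrix_vector_mult_def
  by (simp add: power2_eq_square)

lemma has_derivative_lossL:
  assumes "L \<ge> 1"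
  shows "(lossL L A b has_derivative (\<lambda>h. lossL_grad L A b y \<bullet> h)) (at y)"
proof -
  have nth: "((\<lambda>y. y $ i) has_derivative (\<lambda>h. h $ i)) (at y)" for i
    by (rule bounded_linear_imp_has_derivative[OF bounded_linear_vec_nth])
  show ?thesis
    unfolding lossL_eq_sum[abs_def]
    apply (rule has_derivative_eq_rhs)
     apply (rule derivative_eq_intros nth refl)+
    using assms
    by (auto simp: lossL_grad_def inner_vec_def vector_matrix_mult_def matrix_vector_mult_def
        sum_distrib_left sum_distrib_right sum_divide_distrib mult_ac intro!: ext sum.swap)
qed

lemma lossL_grad_inner_kernel_direction:
  assumes "A *v v = 0" and "\<forall>i. z $ i \<noteq> 0"
  shows "lossL_grad L A b (s *\<^sub>R z) \<bullet> (\<chi> i. v $ i / (z $ i) ^ (L - 1)) = 0"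
proof -
  define e where "e = (A *v (\<chi> k. (s * z $ k) ^ L) - b) v* A"
  have "lossL_grad L A b (s *\<^sub>R z) \<bullet> (\<chi> i. v $ i / (z $ i) ^ (L - 1)) = s ^ (L - 1) * (e \<bullet> v)"
    using assms(2)
    by (simp add: lossL_grad_def e_def inner_vec_def sum_distrib_left power_mult_distrib mult_ac)
  also have "e \<bullet> v = 0"
    by (simp add: e_def dot_lmul_matrix assms(1))
  finally show ?thesis by simp
qed

lemma has_derivative_normalize_scaled:
  fixes u :: "'a::real_inner"
  assumes "u \<noteq> 0"
  shows "((\<lambda>w. (s / norm w) *\<^sub>R w) has_derivative
           (\<lambda>h. (s / norm u) *\<^sub>R h - (s * (u \<bullet> h) / norm u ^ 3) *\<^sub>R u)) (at u)"
proof -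
  have "((\<lambda>w. s / norm w) has_derivative
          (\<lambda>h. - s * (inverse (norm u) * (h \<bullet> sgn u) * inverse (norm u)) + 0 / norm u)) (at u)"
    using assms by (intro has_derivative_divide has_derivative_const has_derivative_norm) auto
  moreover have "(\<lambda>h. - s * (inverse (norm u) * (h \<bullet> sgn u) * inverse (norm u)) + 0 / norm u)
      = (\<lambda>h. - (s * (u \<bullet> h) / norm u ^ 3))"
    by (simp add: fun_eq_iff sgn_div_norm inner_commute power3_eq_cube divide_inverse)
  ultimately have "((\<lambda>w. s / norm w) has_derivative (\<lambda>h. - (s * (u \<bullet> h) / norm u ^ 3))) (at u)"
    by simp
  from has_derivative_scaleR[OF this has_derivative_ident]
  show ?thesis
    by (rule has_derivative_eq_rhs) (simp add: fun_eq_iff)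
qed

lemma has_derivative_lossWN_direction:
  assumes "L \<ge> 1" and "u \<noteq> 0"
  shows "((\<lambda>w. lossWN L A b s w) has_derivative (\<lambda>h. lossL_grad L A b ((s / norm u) *\<^sub>R u) \<bullet>
           ((s / norm u) *\<^sub>R h - (s * (u \<bullet> h) / norm u ^ 3) *\<^sub>R u))) (at u)"
  unfolding lossWN_def
  using diff_chain_at[OF has_derivative_normalize_scaled[OF assms(2)] has_derivative_lossL[OF assms(1)]]
  by (simp add: o_def)

lemma has_derivative_lossWN_radius:
  assumes "L \<ge> 1"
  shows "((\<lambda>s. lossWN L A b s u) has_real_derivative
           lossL_grad L A b ((s / norm u) *\<^sub>R u) \<bullet> u / norm u) (at s)"
proof -
  define g where "g = lossL_grad L A b ((s / norm u) *\<^sub>R u)"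
  have "((\<lambda>s. (s / norm u) *\<^sub>R u) has_derivative (\<lambda>h. (h / norm u) *\<^sub>R u)) (at s)"
    by (intro bounded_linear_imp_has_derivative bounded_linear_compose[OF bounded_linear_scaleR_left]
        bounded_linear_divide bounded_linear_ident)
  from diff_chain_at[OF this has_derivative_lossL[OF assms(1), of A b]]
  have "((\<lambda>s. lossWN L A b s u) has_derivative (\<lambda>h. g \<bullet> ((h / norm u) *\<^sub>R u))) (at s)"
    by (simp add: lossWN_def o_def g_def)
  moreover have "(\<lambda>h. g \<bullet> ((h / norm u) *\<^sub>R u)) = (*) (g \<bullet> u / norm u)"
    by (simp add: fun_eq_iff)
  ultimately show ?thesis
    unfolding has_field_derivative_def g_def by (rule back_subst)
qed

lemma lossWN_direction_gradient_orthogonal: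
  assumes "L \<ge> 1" and "((\<lambda>w. lossWN L A b s w) has_derivative (\<lambda>h. gu \<bullet> h)) (at u)"
  shows "gu \<bullet> u = 0"
proof (cases "u = 0")
  case False
  have zero: "(s / norm u) *\<^sub>R u - (s * (u \<bullet> u) / norm u ^ 3) *\<^sub>R u = 0"
    using False by (simp add: dot_square_norm power3_eq_cube power2_eq_square)
  have "gu \<bullet> u = lossL_grad L A b ((s / norm u) *\<^sub>R u) \<bullet>
      ((s / norm u) *\<^sub>R u - (s * (u \<bullet> u) / norm u ^ 3) *\<^sub>R u)"
    using has_derivative_unique[OF assms(2) has_derivative_lossWN_direction[OF assms(1) False]]
    by (rule fun_cong)
  then show ?thesis unfolding zero by simp
qed simp

lemma lossWN_gradients_unit_direction:
  fixes u :: "real^'n"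
  assumes "L \<ge> 1" and "norm u = 1"
    and radius: "((\<lambda>s. lossWN L A b s u) has_real_derivative gr) (at s)"
    and direction: "((\<lambda>w. lossWN L A b s w) has_derivative (\<lambda>h. gu \<bullet> h)) (at u)"
  defines "g \<equiv> lossL_grad L A b (s *\<^sub>R u)"
  shows "gr = g \<bullet> u" and "gu = s *\<^sub>R (g - (g \<bullet> u) *\<^sub>R u)"
proof -
  have "u \<noteq> 0" using assms(2) by auto
  show "gr = g \<bullet> u"
    using DERIV_unique[OF radius has_derivative_lossWN_radius[OF assms(1)]] assms(2)
    by (simp add: g_def)
  from has_derivative_lossWN_direction[OF assms(1) \<open>u \<noteq> 0\<close>, of A b s]
  have "((\<lambda>w. lossWN L A b s w) has_derivative (\<lambda>h. (s *\<^sub>R (g - (g \<bullet> u) *\<^sub>R u)) \<bullet> h)) (at u)"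
    by (rule has_derivative_eq_rhs)
      (use assms(2) in \<open>auto simp: g_def fun_eq_iff algebra_simps inner_commute\<close>)
  then show "gu = s *\<^sub>R (g - (g \<bullet> u) *\<^sub>R u)"
    using has_derivative_inner_unique[OF direction] by blast
qed

section \<open>A potential for positive vectors\<close>

definition inv_power_primitive :: "nat \<Rightarrow> real \<Rightarrow> real" where
  "inv_power_primitive L y = (if L = 2 then ln y else - 1 / (real (L - 2) * y ^ (L - 2)))"

lemma DERIV_inv_power_primitive:
  assumes "L \<ge> 2" and "0 < y"
  shows "(inv_power_primitive L has_real_derivative 1 / y ^ (L - 1)) (at y)"
proof (cases "L = 2")
  case True
  then show ?thesis
    using DERIV_ln_divide[OF assms(2)] by (simp add: inv_power_primitive_def[abs_def])
next
  case False
  then obtain k where L: "L = k + 3" using assms(1)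
    by (metis add.commute le_Suc_ex le_antisym not_less_eq_eq numeral_3_eq_3 numeral_2_eq_2)
  have "((\<lambda>y. - 1 / (real (Suc k) * y ^ Suc k)) has_real_derivative 1 / y ^ (k + 2)) (at y)"
    by (rule derivative_eq_intros refl | use assms in simp)+
  then show ?thesis
    by (simp add: inv_power_primitive_def[abs_def] L numeral_3_eq_3)
qed

lemma inv_power_primitive_mono:
  assumes "0 < y" and "y \<le> z"
  shows "inv_power_primitive L y \<le> inv_power_primitive L z"
proof -
  have "1 / (real (L - 2) * z ^ (L - 2)) \<le> 1 / (real (L - 2) * y ^ (L - 2))"
    using assms by (cases "L - 2 = 0")
      (auto intro!: divide_left_mono mult_left_mono mult_pos_pos power_mono)
  then show ?thesis
    using assms by (simp add: inv_power_primitive_def)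
qed

lemma inv_power_primitive_at_right_0:
  assumes "L \<ge> 2"
  shows "filterlim (inv_power_primitive L) at_bot (at_right 0)"
proof (cases "L = 2")
  case True
  then show ?thesis
    by (simp add: inv_power_primitive_def[abs_def] ln_at_0)
next
  case False
  define k where "k = L - 2"
  have "0 < k" using False assms by (simp add: k_def)
  have "filterlim (\<lambda>y::real. y ^ k) (at_right 0) (at_right 0)"
    unfolding filterlim_at
  proof
    show "\<forall>\<^sub>F y in at_right 0. y ^ k \<in> {0<..} \<and> y ^ k \<noteq> (0::real)"
      by (rule eventually_at_rightI[of 0 1]) auto
    show "((\<lambda>y::real. y ^ k) \<longlongrightarrow> 0) (at_right 0)"
      using tendsto_power[OF tendsto_ident_at, of k 0 "{0<..}"] \<open>0 < k\<close> by simp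
  qed
  from filterlim_compose[OF filterlim_inverse_at_top_right this]
  have "filterlim (\<lambda>y::real. inverse (y ^ k)) at_top (at_right 0)" .
  then have "filterlim (\<lambda>y. - inverse (real k) * inverse (y ^ k)) at_bot (at_right 0)"
    using \<open>0 < k\<close> by (intro filterlim_tendsto_neg_mult_at_bot[OF tendsto_const]) auto
  moreover have "inv_power_primitive L = (\<lambda>y. - inverse (real k) * inverse (y ^ k))"
    using False by (simp add: fun_eq_iff inv_power_primitive_def k_def divide_inverse)
  ultimately show ?thesis by simp
qed

lemma lower_bound_if_potential_bounded:
  fixes v :: "real^'n"
  assumes "L \<ge> 2" and v: "\<forall>i. 0 < v $ i"
  shows "\<exists>c>0. \<forall>y. (\<forall>i. 0 < y $ i \<and> y $ i \<le> C) \<longrightarrow>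
           K \<le> (\<Sum>i\<in>UNIV. v $ i * inv_power_primitive L (y $ i)) \<longrightarrow> (\<forall>i. c \<le> y $ i)"
proof -
  define P where "P = (\<Sum>i\<in>UNIV. v $ i * \<bar>inv_power_primitive L C\<bar>)"
  define K' where "K' = Min (range (\<lambda>j. (K - P) / v $ j))"
  have "\<forall>\<^sub>F y in at_right 0. inv_power_primitive L y < K'"
    using inv_power_primitive_at_right_0[OF assms(1)] by (simp add: filterlim_at_bot_dense)
  then obtain d where "0 < d" and d: "\<And>y. 0 < y \<Longrightarrow> y < d \<Longrightarrow> inv_power_primitive L y < K'"
    by (auto simp: eventually_at_right_field)
  show ?thesis
  proof (intro exI conjI allI impI)
    show "0 < d / 2" using \<open>0 < d\<close> by simp
    fix y :: "real^'n" and j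
    assume box: "\<forall>i. 0 < y $ i \<and> y $ i \<le> C"
      and bound: "K \<le> (\<Sum>i\<in>UNIV. v $ i * inv_power_primitive L (y $ i))"
    have "v $ i * inv_power_primitive L (y $ i) \<le> v $ i * \<bar>inv_power_primitive L C\<bar>" for i
      using box v inv_power_primitive_mono[of "y $ i" C L]
      by (intro mult_left_mono) (auto simp: less_imp_le)
    then have "(\<Sum>i\<in>UNIV - {j}. v $ i * inv_power_primitive L (y $ i))
        \<le> (\<Sum>i\<in>UNIV - {j}. v $ i * \<bar>inv_power_primitive L C\<bar>)"
      by (rule sum_mono)
    also have "\<dots> \<le> P"
      unfolding P_def using v by (intro sum_mono2) (auto simp: less_imp_le)
    finally have "K - P \<le> v $ j * inv_power_primitive L (y $ j)"
      using bound sum.remove[of UNIV j "\<lambda>i. v $ i * inv_power_primitive L (y $ i)"] by simp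
    then have "(K - P) / v $ j \<le> inv_power_primitive L (y $ j)"
      using v by (simp add: pos_divide_le_eq mult.commute)
    moreover have "K' \<le> (K - P) / v $ j"
      unfolding K'_def by (rule Min_le) auto
    ultimately have "K' \<le> inv_power_primitive L (y $ j)" by simp
    show "d / 2 \<le> y $ j"
    proof (rule ccontr)
      assume "\<not> d / 2 \<le> y $ j"
      then have "y $ j < d" using \<open>0 < d\<close> by simp
      then have "inv_power_primitive L (y $ j) < K'" using d box by blast
      with \<open>K' \<le> inv_power_primitive L (y $ j)\<close> show False by simp
    qed
  qed
qed

lemma has_real_derivative_potential:
  fixes y :: "real \<Rightarrow> real^'n"
  assumes "L \<ge> 2" and deriv: "(y has_vector_derivative y') (at t within S)"
    and pos: "\<forall>i. 0 < y t $ i"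
  shows "((\<lambda>s. \<Sum>i\<in>UNIV. v $ i * inv_power_primitive L (y s $ i)) has_real_derivative
           y' \<bullet> (\<chi> i. v $ i / (y t $ i) ^ (L - 1))) (at t within S)"
proof -
  have "((\<lambda>s. \<Sum>i\<in>UNIV. v $ i * inv_power_primitive L (y s $ i)) has_real_derivative
          (\<Sum>i\<in>UNIV. v $ i * (1 / (y t $ i) ^ (L - 1) * y' $ i))) (at t within S)"
    by (intro DERIV_sum DERIV_cmult DERIV_chain2[OF DERIV_inv_power_primitive[OF assms(1)]]
        has_vector_derivative_vec_nth[OF deriv] pos[rule_format])
  then show ?thesis
    by (simp add: inner_vec_def mult.commute)
qed

section \<open>The gradient flow\<close>

lemma grad_flow_has_vector_derivative:
  assumes "L \<ge> 1" and "grad_flow L A b x" and "0 \<le> t"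
  shows "(x has_vector_derivative - lossL_grad L A b (x t)) (at t within {0..})"
proof -
  obtain g where g: "(lossL L A b has_derivative (\<lambda>h. g \<bullet> h)) (at (x t))"
    and "(x has_vector_derivative - g) (at t within {0..})"
    using assms(2,3) unfolding grad_flow_def by blast
  moreover have "g = lossL_grad L A b (x t)"
    using has_derivative_inner_unique[OF g has_derivative_lossL[OF assms(1)]] .
  ultimately show ?thesis by simp
qed

lemma grad_flow_lower_bound:
  fixes x :: "real \<Rightarrow> real^'n" and A :: "real^'n^'m"
  assumes L: "L \<ge> 2" and flow: "grad_flow L A b x" and x0: "\<forall>i. 0 < x 0 $ i"
    and v: "\<forall>i. 0 < v $ i" and Av: "A *v v = 0" and C: "\<forall>t\<ge>0. \<forall>i. x t $ i \<le> C"
  shows "\<exists>c>0. \<forall>t\<ge>0. \<forall>i. c \<le> x t $ i"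
proof -
  define \<Phi> where "\<Phi> t = (\<Sum>i\<in>UNIV. v $ i * inv_power_primitive L (x t $ i))" for t
  have deriv: "(x has_vector_derivative - lossL_grad L A b (x t)) (at t within {0..})"
    if "0 \<le> t" for t
    using grad_flow_has_vector_derivative[OF _ flow that] L by simp
  obtain c where "0 < c" and c: "\<And>y. \<forall>i. 0 < y $ i \<and> y $ i \<le> C \<Longrightarrow>
      \<Phi> 0 \<le> (\<Sum>i\<in>UNIV. v $ i * inv_power_primitive L (y $ i)) \<Longrightarrow> \<forall>i. c \<le> y $ i"
    using lower_bound_if_potential_bounded[OF L v, of C "\<Phi> 0"] by blast
  have "\<forall>t\<ge>0. \<forall>i. c \<le> x t $ i"
  proof (rule lower_bound_while_positive[where p = x, OF _ x0 \<open>0 < c\<close>])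
    show "continuous_on {0..} x"
      using deriv by (intro continuous_on_if_has_vector_derivative) auto
    fix T :: real assume "0 \<le> T" and pos: "\<forall>t\<in>{0..T}. \<forall>i. 0 < x t $ i"
    have "\<Phi> T = \<Phi> 0"
    proof (rule constant_if_deriv_zero_within[OF \<open>0 \<le> T\<close>])
      fix t assume t: "0 \<le> t" "t \<le> T"
      then have pos_t: "\<forall>i. 0 < x t $ i" using pos by auto
      have "lossL_grad L A b (1 *\<^sub>R x t) \<bullet> (\<chi> i. v $ i / (x t $ i) ^ (L - 1)) = 0"
        using pos_t by (intro lossL_grad_inner_kernel_direction[OF Av]) (simp add: less_imp_neq[symmetric])
      then show "(\<Phi> has_real_derivative 0) (at t within {0..})"
        using has_real_derivative_potential[OF L deriv[OF t(1)] pos_t, of v]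
        unfolding \<Phi>_def by simp
    qed
    then show "\<forall>i. c \<le> x T $ i"
      using c[of "x T"] pos C \<open>0 \<le> T\<close> unfolding \<Phi>_def by auto
  qed
  then show ?thesis using \<open>0 < c\<close> by blast
qed

section \<open>The weight-normalized flow\<close>

lemma wn_flowE:
  assumes "wn_flow L A b eta_r eta_u r u" and "0 \<le> t"
  obtains gr gu where
    "((\<lambda>s. lossWN L A b s (u t)) has_real_derivative gr) (at (r t))"
    "((\<lambda>w. lossWN L A b (r t) w) has_derivative (\<lambda>h. gu \<bullet> h)) (at (u t))"
    "(r has_real_derivative - eta_r * gr) (at t within {0..})"
    "(u has_vector_derivative - (eta_u *\<^sub>R gu)) (at t within {0..})"
proof -
  from assms obtain gr gu where
    "((\<lambda>s. lossWN L A b s (u t)) has_real_derivative gr) (at (r t)) \<and>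
     ((\<lambda>w. lossWN L A b (r t) w) has_derivative (\<lambda>h. gu \<bullet> h)) (at (u t)) \<and>
     (r has_real_derivative - eta_r * gr) (at t within {0..}) \<and>
     (u has_vector_derivative - (eta_u *\<^sub>R gu)) (at t within {0..})"
    unfolding wn_flow_def by blast
  then show ?thesis using that by blast
qed

lemma wn_flow_norm_preserved:
  assumes "L \<ge> 1" and flow: "wn_flow L A b eta 1 r u" and "norm (u 0) = 1"
  shows "\<forall>t\<ge>0. norm (u t) = 1"
proof -
  have deriv: "((\<lambda>s. u s \<bullet> u s) has_real_derivative 0) (at t within {0..})" if t: "0 \<le> t" for t
  proof -
    obtain gu where gu: "((\<lambda>w. lossWN L A b (r t) w) has_derivative (\<lambda>h. gu \<bullet> h)) (at (u t))"
      and "(u has_vector_derivative - (1 *\<^sub>R gu)) (at t within {0..})"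
      using wn_flowE[OF flow t] by metis
    then have u': "(u has_derivative (\<lambda>h. h *\<^sub>R - gu)) (at t within {0..})"
      by (simp add: has_vector_derivative_def)
    from has_derivative_inner[OF u' u']
    have "((\<lambda>s. u s \<bullet> u s) has_derivative (*) (- 2 * (gu \<bullet> u t))) (at t within {0..})"
      by (rule has_derivative_eq_rhs) (simp add: fun_eq_iff inner_commute)
    then show ?thesis
      using lossWN_direction_gradient_orthogonal[OF assms(1) gu]
      by (simp add: has_field_derivative_def)
  qed
  show ?thesis
  proof (intro allI impI)
    fix T :: real assume "0 \<le> T"
    then have "u T \<bullet> u T = u 0 \<bullet> u 0"
      using deriv by (intro constant_if_deriv_zero_within[where f = "\<lambda>s. u s \<bullet> u s"]) auto
    then show "norm (u T) = 1"
      using \<open>norm (u 0) = 1\<close> norm_ge_zero[of "u T"] by (auto simp: dot_square_norm power2_eq_1_iff)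
  qed
qed

lemma wn_flow_unit_ode:
  assumes "L \<ge> 1" and flow: "wn_flow L A b eta 1 r u" and "norm (u t) = 1" and "0 \<le> t"
  defines "g \<equiv> lossL_grad L A b (r t *\<^sub>R u t)"
  shows "(r has_real_derivative - eta * (g \<bullet> u t)) (at t within {0..})"
    and "(u has_vector_derivative - (r t *\<^sub>R (g - (g \<bullet> u t) *\<^sub>R u t))) (at t within {0..})"
proof -
  obtain gr gu where
    gr: "((\<lambda>s. lossWN L A b s (u t)) has_real_derivative gr) (at (r t))" and
    gu: "((\<lambda>w. lossWN L A b (r t) w) has_derivative (\<lambda>h. gu \<bullet> h)) (at (u t))" and
    "(r has_real_derivative - eta * gr) (at t within {0..})" and
    "(u has_vector_derivative - (1 *\<^sub>R gu)) (at t within {0..})"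
    using wn_flowE[OF flow \<open>0 \<le> t\<close>] by metis
  with lossWN_gradients_unit_direction[OF assms(1,3) gr gu]
  show "(r has_real_derivative - eta * (g \<bullet> u t)) (at t within {0..})"
    and "(u has_vector_derivative - (r t *\<^sub>R (g - (g \<bullet> u t) *\<^sub>R u t))) (at t within {0..})"
    by (simp_all add: g_def)
qed

lemma lossL_grad_radial_bound:
  fixes A :: "real^'n^'m"
  shows "\<exists>K\<ge>0. \<forall>s (w::real^'n). \<bar>s\<bar> \<le> R \<longrightarrow> norm w \<le> 1 \<longrightarrow>
           \<bar>lossL_grad L A b (s *\<^sub>R w) \<bullet> w\<bar> \<le> K * \<bar>s\<bar> ^ (L - 1)"
proof -
  define q where "q p = (\<Sum>j\<in>UNIV. ((\<Sum>i\<in>UNIV. A$j$i * (fst p * (snd p) $ i) ^ L) - b$j) *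
      (\<Sum>i\<in>UNIV. A$j$i * ((snd p) $ i) ^ (L - 1) * (snd p) $ i))" for p :: "real \<times> (real^'n)"
  have factor: "lossL_grad L A b (s *\<^sub>R w) \<bullet> w = s ^ (L - 1) * q (s, w)" for s w
    unfolding q_def lossL_grad_def inner_vec_def vector_matrix_mult_def matrix_vector_mult_def
    by (simp add: sum_distrib_left sum_distrib_right power_mult_distrib mult_ac)
      (subst sum.swap, simp add: mult_ac)
  have "compact (q ` ({-R..R} \<times> cball 0 1))"
    by (intro compact_continuous_image compact_Times compact_Icc compact_cball)
      (auto simp: q_def intro!: continuous_intros)
  then obtain K where K: "\<And>p. p \<in> {-R..R} \<times> cball 0 1 \<Longrightarrow> \<bar>q p\<bar> \<le> K"
    by (meson compact_imp_bounded bounded_real imageI)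
  show ?thesis
  proof (intro exI[of _ "max K 0"] conjI allI impI)
    fix s :: real and w :: "real^'n" assume "\<bar>s\<bar> \<le> R" "norm w \<le> 1"
    then have "\<bar>q (s, w)\<bar> \<le> max K 0" using K[of "(s, w)"] by (force simp: abs_le_iff)
    then show "\<bar>lossL_grad L A b (s *\<^sub>R w) \<bullet> w\<bar> \<le> max K 0 * \<bar>s\<bar> ^ (L - 1)"
      unfolding factor abs_mult power_abs by (simp add: mult.commute mult_right_mono)
  qed simp
qed

lemma unit_flow_radius_nonzero:
  fixes u :: "real \<Rightarrow> real^'n"
  assumes L: "L \<ge> 2" and "0 < eta"
    and r': "\<And>t. 0 \<le> t \<Longrightarrow>
      (r has_real_derivative - eta * (lossL_grad L A b (r t *\<^sub>R u t) \<bullet> u t)) (at t within {0..})"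
    and unit: "\<forall>t\<ge>0. norm (u t) = 1" and R: "\<forall>t\<ge>0. \<bar>r t\<bar> \<le> R" and "0 < r 0"
  shows "\<forall>t\<ge>0. r t \<noteq> 0"
proof -
  define g where "g t = lossL_grad L A b (r t *\<^sub>R u t) \<bullet> u t" for t
  obtain K where "0 \<le> K" and K: "\<And>s w. \<bar>s\<bar> \<le> R \<Longrightarrow> norm w \<le> 1 \<Longrightarrow>
      \<bar>lossL_grad L A b (s *\<^sub>R w) \<bullet> w\<bar> \<le> K * \<bar>s\<bar> ^ (L - 1)"
    using lossL_grad_radial_bound[of R L A b] by blast
  define \<kappa> where "\<kappa> = 2 * eta * K * R ^ (L - 2)"
  have growth: "- \<kappa> * (r t)\<^sup>2 \<le> 2 * r t * (- eta * g t)" if "0 \<le> t" for t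
  proof -
    have "\<bar>g t\<bar> \<le> K * \<bar>r t\<bar> ^ (L - 1)"
      unfolding g_def using K[of "r t" "u t"] R unit that by simp
    then have "\<bar>r t * g t\<bar> \<le> \<bar>r t\<bar> * (K * \<bar>r t\<bar> ^ (L - 1))"
      unfolding abs_mult by (rule mult_left_mono) simp
    also have "\<dots> = K * \<bar>r t\<bar> ^ (L - 2) * (r t)\<^sup>2"
    proof -
      obtain k where "L = k + 2" using L by (metis le_add_diff_inverse2)
      then show ?thesis by (simp add: power2_eq_square mult_ac)
    qed
    also have "\<dots> \<le> K * R ^ (L - 2) * (r t)\<^sup>2"
      using R that \<open>0 \<le> K\<close> by (intro mult_right_mono mult_left_mono power_mono) auto
    finally have "2 * eta * (r t * g t) \<le> \<kappa> * (r t)\<^sup>2"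
      using \<open>0 < eta\<close> unfolding \<kappa>_def by (simp add: mult_left_mono mult_ac)
    then show ?thesis by (simp add: algebra_simps)
  qed
  show ?thesis
  proof (intro allI impI)
    fix T :: real assume "0 \<le> T"
    have "(r 0)\<^sup>2 \<le> (r T)\<^sup>2 * exp (\<kappa> * T)"
    proof (rule lower_bound_of_exponential_decay[OF \<open>0 \<le> T\<close>])
      fix t :: real assume "0 \<le> t"
      show "((\<lambda>t. (r t)\<^sup>2) has_real_derivative 2 * r t * (- eta * g t)) (at t within {0..})"
        using r'[OF \<open>0 \<le> t\<close>] unfolding g_def by (auto intro!: derivative_eq_intros)
      show "- \<kappa> * (r t)\<^sup>2 \<le> 2 * r t * (- eta * g t)"
        using growth[OF \<open>0 \<le> t\<close>] .
    qed
    then show "r T \<noteq> 0" using \<open>0 < r 0\<close> by auto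
  qed
qed

lemma lower_bound_of_additive_conservation:
  fixes \<Psi> r a :: "real \<Rightarrow> real"
  assumes "0 < eta" and "0 \<le> V" and "0 \<le> T" and "(r T)\<^sup>2 \<le> R\<^sup>2"
    and \<Psi>': "\<And>t. 0 \<le> t \<Longrightarrow> t \<le> T \<Longrightarrow> (\<Psi> has_real_derivative r t * a t * V) (at t within {0..})"
    and r': "\<And>t. 0 \<le> t \<Longrightarrow> t \<le> T \<Longrightarrow> (r has_real_derivative - eta * a t) (at t within {0..})"
  shows "\<Psi> 0 - V * R\<^sup>2 / (2 * eta) \<le> \<Psi> T"
proof -
  have "\<Psi> T + V * (r T)\<^sup>2 / (2 * eta) = \<Psi> 0 + V * (r 0)\<^sup>2 / (2 * eta)"
  proof (rule constant_if_deriv_zero_within[OF \<open>0 \<le> T\<close>])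
    fix t assume "0 \<le> t" "t \<le> T"
    then show "((\<lambda>t. \<Psi> t + V * (r t)\<^sup>2 / (2 * eta)) has_real_derivative 0) (at t within {0..})"
      using \<Psi>' r' \<open>0 < eta\<close> by (auto intro!: derivative_eq_intros simp: field_simps)
  qed
  moreover have "V * (r T)\<^sup>2 / (2 * eta) \<le> V * R\<^sup>2 / (2 * eta)"
    using assms(1,2,4) by (intro divide_right_mono mult_left_mono) auto
  moreover have "0 \<le> V * (r 0)\<^sup>2 / (2 * eta)"
    using assms(1,2) by simp
  ultimately show ?thesis by linarith
qed

lemma lower_bound_of_multiplicative_conservation:
  fixes \<Psi> r a :: "real \<Rightarrow> real"
  assumes "0 < eta" and "0 < k" and "\<Psi> 0 \<le> 0" and "0 \<le> T" and "(r T)\<^sup>2 \<le> R\<^sup>2"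
    and \<Psi>': "\<And>t. 0 \<le> t \<Longrightarrow> t \<le> T \<Longrightarrow>
      (\<Psi> has_real_derivative - k * \<Psi> t * r t * a t) (at t within {0..})"
    and r': "\<And>t. 0 \<le> t \<Longrightarrow> t \<le> T \<Longrightarrow> (r has_real_derivative - eta * a t) (at t within {0..})"
  shows "\<Psi> 0 * exp (k * R\<^sup>2 / (2 * eta)) \<le> \<Psi> T"
proof -
  have "\<Psi> T * exp (- k * (r T)\<^sup>2 / (2 * eta)) = \<Psi> 0 * exp (- k * (r 0)\<^sup>2 / (2 * eta))"
  proof (rule constant_if_deriv_zero_within[OF \<open>0 \<le> T\<close>])
    fix t assume "0 \<le> t" "t \<le> T"
    then show "((\<lambda>t. \<Psi> t * exp (- k * (r t)\<^sup>2 / (2 * eta))) has_real_derivative 0) (at t within {0..})"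
      using \<Psi>' r' \<open>0 < eta\<close> by (auto intro!: derivative_eq_intros simp: field_simps)
  qed
  then have "\<Psi> T = \<Psi> 0 * exp (- k * (r 0)\<^sup>2 / (2 * eta)) / exp (- k * (r T)\<^sup>2 / (2 * eta))"
    by (simp add: eq_divide_eq)
  also have "\<dots> = \<Psi> 0 * exp (- k * (r 0)\<^sup>2 / (2 * eta) - - k * (r T)\<^sup>2 / (2 * eta))"
    by (simp only: exp_diff times_divide_eq_right)
  also have "- k * (r 0)\<^sup>2 / (2 * eta) - - k * (r T)\<^sup>2 / (2 * eta)
      = k * ((r T)\<^sup>2 - (r 0)\<^sup>2) / (2 * eta)"
    by (simp add: diff_divide_distrib right_diff_distrib)
  finally have \<Psi>T: "\<Psi> T = \<Psi> 0 * exp (k * ((r T)\<^sup>2 - (r 0)\<^sup>2) / (2 * eta))" .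
  have "(r T)\<^sup>2 - (r 0)\<^sup>2 \<le> R\<^sup>2"
    using assms(5) zero_le_power2[of "r 0"] by linarith
  then have "exp (k * ((r T)\<^sup>2 - (r 0)\<^sup>2) / (2 * eta)) \<le> exp (k * R\<^sup>2 / (2 * eta))"
    using \<open>0 < eta\<close> \<open>0 < k\<close> by (intro exp_mono divide_right_mono mult_left_mono) auto
  then show ?thesis
    unfolding \<Psi>T using \<open>\<Psi> 0 \<le> 0\<close> by (simp add: mult_left_mono_neg)
qed

lemma unit_flow_potential_deriv:
  fixes u g :: "real \<Rightarrow> real^'n"
  assumes L: "L \<ge> 2"
    and u': "(u has_vector_derivative - (r t *\<^sub>R (g t - (g t \<bullet> u t) *\<^sub>R u t))) (at t within {0..})"
    and kernel: "g t \<bullet> (\<chi> i. v $ i / (u t $ i) ^ (L - 1)) = 0"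
    and pos: "\<forall>i. 0 < u t $ i"
  shows "((\<lambda>t. \<Sum>i\<in>UNIV. v $ i * inv_power_primitive L (u t $ i)) has_real_derivative
           r t * (g t \<bullet> u t) * (\<Sum>i\<in>UNIV. v $ i / (u t $ i) ^ (L - 2))) (at t within {0..})"
proof -
  have "u t $ i * (v $ i / (u t $ i) ^ (L - 1)) = v $ i / (u t $ i) ^ (L - 2)" for i
  proof -
    have "u t $ i \<noteq> 0" using pos by (metis less_irrefl)
    moreover have "L - 1 = Suc (L - 2)" using L by simp
    ultimately show ?thesis by simp
  qed
  then have "u t \<bullet> (\<chi> i. v $ i / (u t $ i) ^ (L - 1)) = (\<Sum>i\<in>UNIV. v $ i / (u t $ i) ^ (L - 2))"
    by (simp add: inner_vec_def)
  then show ?thesis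
    using has_real_derivative_potential[OF L u' pos, of v] kernel
    by (simp add: inner_diff_left algebra_simps)
qed

lemma unit_flow_potential_lower_bound:
  fixes u g :: "real \<Rightarrow> real^'n"
  assumes L: "L \<ge> 2" and "0 < eta"
    and r': "\<And>t. 0 \<le> t \<Longrightarrow> (r has_real_derivative - eta * (g t \<bullet> u t)) (at t within {0..})"
    and u': "\<And>t. 0 \<le> t \<Longrightarrow>
      (u has_vector_derivative - (r t *\<^sub>R (g t - (g t \<bullet> u t) *\<^sub>R u t))) (at t within {0..})"
    and kernel: "\<And>t. 0 \<le> t \<Longrightarrow> \<forall>i. 0 < u t $ i \<Longrightarrow>
      g t \<bullet> (\<chi> i. v $ i / (u t $ i) ^ (L - 1)) = 0"
    and v: "\<forall>i. 0 < v $ i" and R: "\<forall>t\<ge>0. \<bar>r t\<bar> \<le> R"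
  defines "\<Psi> \<equiv> \<lambda>t. \<Sum>i\<in>UNIV. v $ i * inv_power_primitive L (u t $ i)"
  shows "\<exists>K. \<forall>T\<ge>0. (\<forall>t\<in>{0..T}. \<forall>i. 0 < u t $ i) \<longrightarrow> K \<le> \<Psi> T"
proof -
  define W where "W t = (\<Sum>i\<in>UNIV. v $ i / (u t $ i) ^ (L - 2))" for t
  have \<Psi>': "(\<Psi> has_real_derivative r t * (g t \<bullet> u t) * W t) (at t within {0..})"
    if "0 \<le> t" "t \<le> T" and "\<forall>t\<in>{0..T}. \<forall>i. 0 < u t $ i" for t T
    using that unfolding \<Psi>_def W_def
    by (intro unit_flow_potential_deriv[OF L u' kernel]) auto
  have r2: "(r T)\<^sup>2 \<le> R\<^sup>2" if "0 \<le> T" for T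
    using R that by (metis abs_ge_zero power2_abs power_mono)
  show ?thesis
  proof (cases "L = 2")
    case True
    have "W t = (\<Sum>i\<in>UNIV. v $ i)" for t using True by (simp add: W_def)
    moreover have "0 \<le> (\<Sum>i\<in>UNIV. v $ i)" using v by (simp add: sum_nonneg less_imp_le)
    ultimately show ?thesis
      using \<Psi>' r' r2 \<open>0 < eta\<close>
      by (metis lower_bound_of_additive_conservation[where \<Psi> = \<Psi> and a = "\<lambda>t. g t \<bullet> u t"])
  next
    case False
    define k where "k = real (L - 2)"
    have "0 < k" using L False by (simp add: k_def)
    have "\<Psi> t = - W t / k" for t
      by (simp add: \<Psi>_def W_def k_def inv_power_primitive_def False sum_divide_distrib
          sum_negf[symmetric] mult.commute)
    then have W\<Psi>: "W t = - k * \<Psi> t" for t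
      using \<open>0 < k\<close> by simp
    have "\<Psi> 0 * exp (k * R\<^sup>2 / (2 * eta)) \<le> \<Psi> T"
      if "0 \<le> T" and pos: "\<forall>t\<in>{0..T}. \<forall>i. 0 < u t $ i" for T
    proof (rule lower_bound_of_multiplicative_conservation[where r = r and a = "\<lambda>t. g t \<bullet> u t",
          OF \<open>0 < eta\<close> \<open>0 < k\<close> _ that(1) r2[OF that(1)]])
      have "0 \<le> W 0"
        unfolding W_def using v pos \<open>0 \<le> T\<close> by (intro sum_nonneg) (simp add: less_imp_le)
      then have "k * \<Psi> 0 \<le> 0" using W\<Psi>[of 0] by simp
      then show "\<Psi> 0 \<le> 0" using \<open>0 < k\<close> by (simp add: mult_le_0_iff)
      fix t assume t: "0 \<le> t" "t \<le> T"
      show "(\<Psi> has_real_derivative - k * \<Psi> t * r t * (g t \<bullet> u t)) (at t within {0..})"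
        using \<Psi>'[OF t pos] W\<Psi>[of t] by (simp add: mult_ac)
      show "(r has_real_derivative - eta * (g t \<bullet> u t)) (at t within {0..})"
        using r' \<open>0 \<le> t\<close> .
    qed
    then show ?thesis by blast
  qed
qed

lemma unit_flow_radius_bounds:
  fixes u :: "real \<Rightarrow> real^'n"
  assumes L: "L \<ge> 2" and "0 < eta"
    and r': "\<And>t. 0 \<le> t \<Longrightarrow>
      (r has_real_derivative - eta * (lossL_grad L A b (r t *\<^sub>R u t) \<bullet> u t)) (at t within {0..})"
    and unit: "\<forall>t\<ge>0. norm (u t) = 1" and "0 < r 0"
    and lim: "(r \<longlongrightarrow> \<rho>) at_top" and "\<rho> \<noteq> 0"
  shows "\<exists>m R. 0 < m \<and> (\<forall>t\<ge>0. m \<le> \<bar>r t\<bar> \<and> \<bar>r t\<bar> \<le> R)"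
proof -
  have cont: "continuous_on {0..} r"
    using r' by (intro continuous_on_if_has_vector_derivative)
      (auto simp: has_real_derivative_iff_has_vector_derivative)
  obtain R where R: "\<forall>t\<ge>0. \<bar>r t\<bar> \<le> R"
    using bounded_if_continuous_convergent[OF cont lim] by blast
  obtain m where "0 < m" and "\<forall>t\<ge>0. m \<le> \<bar>r t\<bar>"
    using bounded_away_if_continuous_convergent_nonzero[OF cont lim
        unit_flow_radius_nonzero[OF L \<open>0 < eta\<close> r' unit R \<open>0 < r 0\<close>] \<open>\<rho> \<noteq> 0\<close>] by blast
  with R show ?thesis by blast
qed

lemma unit_flow_direction_lower_bound:
  fixes u g :: "real \<Rightarrow> real^'n"
  assumes L: "L \<ge> 2" and "0 < eta"
    and r': "\<And>t. 0 \<le> t \<Longrightarrow> (r has_real_derivative - eta * (g t \<bullet> u t)) (at t within {0..})"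
    and u': "\<And>t. 0 \<le> t \<Longrightarrow>
      (u has_vector_derivative - (r t *\<^sub>R (g t - (g t \<bullet> u t) *\<^sub>R u t))) (at t within {0..})"
    and kernel: "\<And>t. 0 \<le> t \<Longrightarrow> \<forall>i. 0 < u t $ i \<Longrightarrow>
      g t \<bullet> (\<chi> i. v $ i / (u t $ i) ^ (L - 1)) = 0"
    and unit: "\<forall>t\<ge>0. norm (u t) = 1" and u0: "\<forall>i. 0 < u 0 $ i"
    and v: "\<forall>i. 0 < v $ i" and R: "\<forall>t\<ge>0. \<bar>r t\<bar> \<le> R"
  shows "\<exists>c>0. \<forall>t\<ge>0. \<forall>i. c \<le> u t $ i"
proof -
  obtain K where K: "\<And>T. 0 \<le> T \<Longrightarrow> \<forall>t\<in>{0..T}. \<forall>i. 0 < u t $ i \<Longrightarrow>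
      K \<le> (\<Sum>i\<in>UNIV. v $ i * inv_power_primitive L (u T $ i))"
    using unit_flow_potential_lower_bound[OF L \<open>0 < eta\<close> r' u' kernel v R] by blast
  obtain c where "0 < c" and c: "\<And>y. \<forall>i. 0 < y $ i \<and> y $ i \<le> 1 \<Longrightarrow>
      K \<le> (\<Sum>i\<in>UNIV. v $ i * inv_power_primitive L (y $ i)) \<Longrightarrow> \<forall>i. c \<le> y $ i"
    using lower_bound_if_potential_bounded[OF L v, of 1 K] by blast
  have "\<forall>t\<ge>0. \<forall>i. c \<le> u t $ i"
  proof (rule lower_bound_while_positive[where p = u, OF _ u0 \<open>0 < c\<close>])
    show "continuous_on {0..} u"
      using u' by (intro continuous_on_if_has_vector_derivative) auto
    fix T :: real assume "0 \<le> T" and pos: "\<forall>t\<in>{0..T}. \<forall>i. 0 < u t $ i"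
    have "u T $ i \<le> 1" for i
      using component_le_norm_cart[of "u T" i] unit \<open>0 \<le> T\<close> by simp
    then show "\<forall>i. c \<le> u T $ i"
      using c[of "u T"] K[OF \<open>0 \<le> T\<close> pos] pos \<open>0 \<le> T\<close> by auto
  qed
  then show ?thesis using \<open>0 < c\<close> by blast
qed

lemma wn_flow_lower_bound:
  fixes A :: "real^'n^'m" and u :: "real \<Rightarrow> real^'n"
  assumes L: "L \<ge> 2" and "0 < eta" and flow: "wn_flow L A b eta 1 r u"
    and "0 < r 0" and u0: "\<forall>i. 0 < u 0 $ i" and "norm (u 0) = 1"
    and lim: "(r \<longlongrightarrow> \<rho>) at_top" and "\<rho> \<noteq> 0"
    and v: "\<forall>i. 0 < v $ i" and Av: "A *v v = 0"
  shows "\<exists>c>0. \<forall>t\<ge>0. \<forall>i. c \<le> \<bar>((r t / norm (u t)) *\<^sub>R u t) $ i\<bar>"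
proof -
  have "L \<ge> 1" using L by simp
  have unit: "\<forall>t\<ge>0. norm (u t) = 1"
    using wn_flow_norm_preserved[OF \<open>L \<ge> 1\<close> flow \<open>norm (u 0) = 1\<close>] .
  note r' = wn_flow_unit_ode(1)[OF \<open>L \<ge> 1\<close> flow unit[rule_format]]
  note u' = wn_flow_unit_ode(2)[OF \<open>L \<ge> 1\<close> flow unit[rule_format]]
  have kernel: "lossL_grad L A b (r t *\<^sub>R u t) \<bullet> (\<chi> i. v $ i / (u t $ i) ^ (L - 1)) = 0"
    if "\<forall>i. 0 < u t $ i" for t
    using that by (intro lossL_grad_inner_kernel_direction[OF Av]) (simp add: less_imp_neq[symmetric])
  obtain m R where "0 < m" and r_bounds: "\<forall>t\<ge>0. m \<le> \<bar>r t\<bar> \<and> \<bar>r t\<bar> \<le> R"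
    using unit_flow_radius_bounds[OF L \<open>0 < eta\<close> r' unit \<open>0 < r 0\<close> lim \<open>\<rho> \<noteq> 0\<close>] by blast
  obtain c where "0 < c" and c: "\<forall>t\<ge>0. \<forall>i. c \<le> u t $ i"
    using unit_flow_direction_lower_bound[OF L \<open>0 < eta\<close> r' u' kernel unit u0 v] r_bounds by blast
  have "m * c \<le> \<bar>((r t / norm (u t)) *\<^sub>R u t) $ i\<bar>" if "0 \<le> t" for t i
  proof -
    have "0 < u t $ i" using c that \<open>0 < c\<close> by (meson less_le_trans)
    then have "\<bar>((r t / norm (u t)) *\<^sub>R u t) $ i\<bar> = \<bar>r t\<bar> * u t $ i"
      using unit that by (simp add: abs_mult)
    moreover have "m * c \<le> \<bar>r t\<bar> * u t $ i"
      using r_bounds c that \<open>0 < m\<close> \<open>0 < c\<close> by (intro mult_mono) auto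
    ultimately show ?thesis by simp
  qed
  then show ?thesis using \<open>0 < m\<close> \<open>0 < c\<close> by (intro exI[of _ "m * c"]) auto
qed

theorem mainTheorem12:
  fixes L :: nat and A :: "real^'n^'m" and b :: "real^'m" and eta :: real
    and x :: "real \<Rightarrow> real^'n" and r :: "real \<Rightarrow> real" and u :: "real \<Rightarrow> real^'n"
  assumes "L \<ge> 2" and "eta > 0"
    and "grad_flow L A b x" and "\<forall>i. x 0 $ i > 0"
    and "wn_flow L A b eta 1 r u"
    and "r 0 > 0" and "\<forall>i. u 0 $ i > 0" and "norm (u 0) = 1"
    and "\<exists>\<rho>. \<rho> \<noteq> 0 \<and> (r \<longlongrightarrow> \<rho>) at_top"
    and "\<exists>v :: real^'n. (\<forall>i. v $ i > 0) \<and> A *v v = 0"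
    and "\<exists>C. \<forall>t\<ge>0. \<forall>i. x t $ i \<le> C"
    and "\<exists>C. \<forall>t\<ge>0. \<forall>i. ((r t / norm (u t)) *\<^sub>R u t) $ i \<le> C"
  shows "\<exists>c>0. \<forall>t\<ge>0. \<forall>i. c \<le> \<bar>x t $ i\<bar> \<and> c \<le> \<bar>((r t / norm (u t)) *\<^sub>R u t) $ i\<bar>"
proof -
  obtain v where v: "\<forall>i. 0 < v $ i" and Av: "A *v v = 0" using assms(10) by blast
  obtain \<rho> where "\<rho> \<noteq> 0" and lim: "(r \<longlongrightarrow> \<rho>) at_top" using assms(9) by blast
  obtain cx where "0 < cx" and cx: "\<forall>t\<ge>0. \<forall>i. cx \<le> x t $ i"
    using assms(11) grad_flow_lower_bound[OF assms(1,3,4) v Av] by blast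
  obtain cw where "0 < cw" and cw: "\<forall>t\<ge>0. \<forall>i. cw \<le> \<bar>((r t / norm (u t)) *\<^sub>R u t) $ i\<bar>"
    using wn_flow_lower_bound[OF assms(1,2,5,6,7,8) lim \<open>\<rho> \<noteq> 0\<close> v Av] by blast
  show ?thesis
  proof (intro exI[of _ "min cx cw"] conjI allI impI)
    show "0 < min cx cw" using \<open>0 < cx\<close> \<open>0 < cw\<close> by simp
    fix t :: real and i assume "0 \<le> t"
    then show "min cx cw \<le> \<bar>x t $ i\<bar>" and "min cx cw \<le> \<bar>((r t / norm (u t)) *\<^sub>R u t) $ i\<bar>"
      using cx cw by (meson abs_ge_self min.coboundedI1 min.coboundedI2 order_trans)+
  qed
qed

end
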